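(* Let $\epsilon>0$ and $\theta=(w,\mu,\tau)\in\Theta_k$. Then $\|\mathcal{M}_\theta-P_{\epsilon,\theta}\|_1\le\epsilon$.
   Context: $\mathcal{N}(x)=\frac{1}{\sqrt{2\pi}}e^{-x^2/2}$ is the standard Gaussian density and $T_d$ its degree-$d$ Taylor expansion around $0$. Fix $K$ such that $\int_{-2\sqrt{\log(1/\epsilon)}}^{2\sqrt{\log(1/\epsilon)}}|\mathcal{N}(x)-T_{2K\log(1/\epsilon)}(x)|\,dx<\epsilon/4$. Define the piecewise polynomial $\widetilde{P}_\epsilon(x)=T_{2K\log(1/\epsilon)}(x)$ if $x\in[-2\sqrt{\log(1/\epsilon)},2\sqrt{\log(1/\epsilon)}]$ and $\widetilde{P}_\epsilon(x)=0$ otherwise. $\Theta_k=\{(w,\mu,\tau): w\in\mathbb{R}^k, w_i\ge0,\sum_i w_i=1,\ \mu\in\mathbb{R}^k,\ \tau\in\mathbb{R}_{>0}^k\}$; for $\theta\in\Theta_k$, $\mathcal{M}_\theta(x)=\sum_{i=1}^k w_i\frac{\tau_i}{\sqrt{2\pi}}e^{-\tau_i^2(x-\mu_i)^2/2}$ and $P_{\epsilon,\theta}(x)=\sum_{i=1}^k w_i\tau_i\widetilde{P}_\epsilon(\tau_i(x-\mu_i))$. $\|g\|_1=\int|g|$. *)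

theory Defs
  imports "HOL-Analysis.Analysis"
begin

definition gauss :: "real \<Rightarrow> real" where
  "gauss x = exp (- (x\<^sup>2) / 2) / sqrt (2 * pi)"

definition taylor_gauss :: "nat \<Rightarrow> real \<Rightarrow> real" where
  "taylor_gauss d x = (\<Sum>j\<le>d. (deriv ^^ j) gauss 0 / fact j * x ^ j)"

definition taylor_deg :: "real \<Rightarrow> real \<Rightarrow> nat" where
  "taylor_deg K eps = nat \<lceil>2 * K * ln (1 / eps)\<rceil>"

definition Ptilde :: "real \<Rightarrow> real \<Rightarrow> real \<Rightarrow> real" where
  "Ptilde K eps x =
     (if x \<in> {- 2 * sqrt (ln (1 / eps)) .. 2 * sqrt (ln (1 / eps))}
      then taylor_gauss (taylor_deg K eps) x else 0)"

definition in_Theta :: "nat \<Rightarrow> (nat \<Rightarrow> real) \<Rightarrow> (nat \<Rightarrow> real) \<Rightarrow> (nat \<Rightarrow> real) \<Rightarrow> bool" where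
  "in_Theta k w \<mu> \<tau> \<longleftrightarrow>
     (\<forall>i<k. w i \<ge> 0) \<and> (\<Sum>i<k. w i) = 1 \<and> (\<forall>i<k. \<tau> i > 0)"

definition mixture :: "nat \<Rightarrow> (nat \<Rightarrow> real) \<Rightarrow> (nat \<Rightarrow> real) \<Rightarrow> (nat \<Rightarrow> real) \<Rightarrow> real \<Rightarrow> real" where
  "mixture k w \<mu> \<tau> x =
     (\<Sum>i<k. w i * \<tau> i / sqrt (2 * pi) * exp (- (\<tau> i)\<^sup>2 * (x - \<mu> i)\<^sup>2 / 2))"

definition P_mix :: "real \<Rightarrow> real \<Rightarrow> nat \<Rightarrow> (nat \<Rightarrow> real) \<Rightarrow> (nat \<Rightarrow> real) \<Rightarrow> (nat \<Rightarrow> real) \<Rightarrow> real \<Rightarrow> real" where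
  "P_mix K eps k w \<mu> \<tau> x = (\<Sum>i<k. w i * \<tau> i * Ptilde K eps (\<tau> i * (x - \<mu> i)))"

end

theory Submission
  imports Defs "HOL-Probability.Probability"
begin

(*
  Each mixture component is the rescaling x \<mapsto> \<tau> N(\<tau>(x - \<mu>)) of the standard Gaussian N, and
  P_{\<epsilon>,\<theta>} is the same mixture of rescalings of P~_\<epsilon>. Rescalings preserve the L1 norm, so the
  triangle inequality reduces the claim to ||N - P~_\<epsilon>||_1 \<le> \<epsilon>.

  Put c = 2 sqrt(log(1/\<epsilon>)), so that \<epsilon> = exp(-c^2/4). The norm splits into the Taylor error on
  [-c, c], which is below \<epsilon>/4 by hypothesis, and the Gaussian mass outside [-c, c], which is at
  most 2 exp(-c^2/2) / (c sqrt(2\<pi>)) = 2 \<epsilon>^2 / (c sqrt(2\<pi>)) \<le> 3\<epsilon>/4 as soon as c \<ge> 1.1.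
  For smaller c the tail is not small compared to \<epsilon>; there one uses that the Maclaurin series
  of N is alternating with decreasing terms on [-sqrt 2, sqrt 2], so every Taylor polynomial is
  within x^2 / (2 sqrt(2\<pi>)) of N, and the norm is at most 1 - c(2 - 2c^2/3)/sqrt(2\<pi>) \<le> \<epsilon>.
*)

lemma funpow_diffs:
  fixes a :: "nat \<Rightarrow> 'a::field_char_0"
  shows "(diffs ^^ j) a n = fact (n + j) / fact n * a (n + j)"
proof (induction j arbitrary: a)
  case 0
  then show ?case by simp
next
  case (Suc j)
  have "(diffs ^^ Suc j) a n = (diffs ^^ j) (diffs a) n"
    by (simp add: funpow_Suc_right del: funpow.simps)
  also have "\<dots> = fact (n + j) / fact n * diffs a (n + j)"
    by (rule Suc.IH)
  also have "\<dots> = fact (n + Suc j) / fact n * a (n + Suc j)"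
    by (simp add: diffs_def field_simps)
  finally show ?case .
qed

lemma higher_deriv_powser:
  fixes a :: "nat \<Rightarrow> 'a::{real_normed_field,banach}"
  assumes "\<And>x. summable (\<lambda>n. a n * x ^ n)"
  shows "(deriv ^^ j) (\<lambda>x. \<Sum>n. a n * x ^ n) = (\<lambda>x. \<Sum>n. (diffs ^^ j) a n * x ^ n)"
  using assms
proof (induction j arbitrary: a)
  case 0
  then show ?case by simp
next
  case (Suc j)
  have "(deriv ^^ Suc j) (\<lambda>x. \<Sum>n. a n * x ^ n) = (deriv ^^ j) (deriv (\<lambda>x. \<Sum>n. a n * x ^ n))"
    by (simp add: funpow_Suc_right del: funpow.simps)
  also have "deriv (\<lambda>x. \<Sum>n. a n * x ^ n) = (\<lambda>x. \<Sum>n. diffs a n * x ^ n)"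
    using termdiffs_strong_converges_everywhere[OF Suc.prems] by (intro ext DERIV_imp_deriv)
  also have "(deriv ^^ j) (\<lambda>x. \<Sum>n. diffs a n * x ^ n) = (\<lambda>x. \<Sum>n. (diffs ^^ j) (diffs a) n * x ^ n)"
    by (rule Suc.IH) (rule termdiff_converges_all[OF Suc.prems])
  finally show ?case by (simp add: funpow_Suc_right del: funpow.simps)
qed

lemma higher_deriv_powser_0:
  fixes a :: "nat \<Rightarrow> 'a::{real_normed_field,banach}"
  assumes "\<And>x. summable (\<lambda>n. a n * x ^ n)"
  shows "(deriv ^^ j) (\<lambda>x. \<Sum>n. a n * x ^ n) 0 = fact j * a j"
  using powser_zero[of "(diffs ^^ j) a"] by (simp add: higher_deriv_powser[OF assms] funpow_diffs)

definition gauss_coeff :: "nat \<Rightarrow> real" where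
  "gauss_coeff n = (if even n then (-1/2) ^ (n div 2) / fact (n div 2) / sqrt (2 * pi) else 0)"

lemma gauss_coeff_double:
  "gauss_coeff (2 * m) * x ^ (2 * m) = (- (x\<^sup>2) / 2) ^ m / fact m / sqrt (2 * pi)"
proof -
  have "(-1/2) ^ m * x ^ (2 * m) = (- (x\<^sup>2) / 2) ^ m"
    by (simp add: power_mult power_mult_distrib[symmetric])
  then show ?thesis
    by (simp add: gauss_coeff_def)
qed

lemma gauss_sums: "(\<lambda>n. gauss_coeff n * x ^ n) sums gauss x"
proof -
  have "(\<lambda>m. (- (x\<^sup>2) / 2) ^ m /\<^sub>R fact m) sums exp (- (x\<^sup>2) / 2)"
    by (rule exp_converges)
  then have "(\<lambda>m. (- (x\<^sup>2) / 2) ^ m / fact m) sums exp (- (x\<^sup>2) / 2)"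
    by (simp only: real_scaleR_def divide_inverse mult_ac)
  then have "(\<lambda>m. (- (x\<^sup>2) / 2) ^ m / fact m / sqrt (2 * pi)) sums gauss x"
    unfolding gauss_def by (rule sums_divide)
  from sums_if[OF sums_zero this]
  have "(\<lambda>n. if even n then (- (x\<^sup>2) / 2) ^ (n div 2) / fact (n div 2) / sqrt (2 * pi) else 0)
      sums gauss x"
    by simp
  moreover have "(if even n then (- (x\<^sup>2) / 2) ^ (n div 2) / fact (n div 2) / sqrt (2 * pi) else 0)
      = gauss_coeff n * x ^ n" for n
  proof (cases "even n")
    case True
    then obtain m where "n = 2 * m"
      by blast
    then show ?thesis
      by (simp only: gauss_coeff_double) simp
  qed (simp add: gauss_coeff_def)
  ultimately show ?thesis
    by simp
qed

lemma taylor_coeff_gauss: "(deriv ^^ j) gauss 0 / fact j = gauss_coeff j"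
proof -
  have gauss_powser: "gauss = (\<lambda>x. \<Sum>n. gauss_coeff n * x ^ n)"
    using gauss_sums by (auto simp: sums_iff fun_eq_iff)
  have "\<And>x. summable (\<lambda>n. gauss_coeff n * x ^ n)"
    using gauss_sums sums_summable by blast
  then have "(deriv ^^ j) gauss 0 = fact j * gauss_coeff j"
    unfolding gauss_powser by (rule higher_deriv_powser_0)
  then show ?thesis
    by simp
qed

lemma taylor_gauss_eq_partial_sum:
  "taylor_gauss d x = (\<Sum>m<Suc (d div 2). (- (x\<^sup>2) / 2) ^ m / fact m) / sqrt (2 * pi)"
proof -
  have "taylor_gauss d x = (\<Sum>j<Suc d. gauss_coeff j * x ^ j)"
    unfolding taylor_gauss_def taylor_coeff_gauss lessThan_Suc_atMost ..
  also have "\<dots> = (\<Sum>j<2 * Suc (d div 2). gauss_coeff j * x ^ j)"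
  proof (cases "even d")
    case True
    then have "2 * Suc (d div 2) = Suc (Suc d)"
      by auto
    then show ?thesis
      using True by (simp add: gauss_coeff_def)
  next
    case False
    then have "2 * Suc (d div 2) = Suc d"
      by presburger
    then show ?thesis
      by simp
  qed
  also have "\<dots> = (\<Sum>j<2 * Suc (d div 2). if even j then gauss_coeff j * x ^ j else 0)"
    by (intro sum.cong) (auto simp: gauss_coeff_def)
  also have "\<dots> = (\<Sum>m<Suc (d div 2). gauss_coeff (2 * m) * x ^ (2 * m))"
    by (subst sum_split_even_odd) simp
  also have "\<dots> = (\<Sum>m<Suc (d div 2). (- (x\<^sup>2) / 2) ^ m / fact m) / sqrt (2 * pi)"
    by (simp only: gauss_coeff_double sum_divide_distrib)
  finally show ?thesis .
qed

lemma abs_suminf_alternating_minus_partial_sum_le: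
  fixes a :: "nat \<Rightarrow> real"
  assumes "a \<longlonglongrightarrow> 0" and "\<And>n. 0 \<le> a n" and "\<And>n. a (Suc n) \<le> a n"
  shows "\<bar>(\<Sum>i. (-1) ^ i * a i) - (\<Sum>i<n. (-1) ^ i * a i)\<bar> \<le> a n"
proof -
  note Leibniz = summable_Leibniz'[OF assms]
  define S where "S n = (\<Sum>i<n. (-1) ^ i * a i)" for n
  have S_Suc: "S (Suc m) = S m + (-1) ^ m * a m" for m
    by (simp add: S_def)
  have "\<bar>(\<Sum>i. (-1) ^ i * a i) - S n\<bar> \<le> a n"
  proof (cases "even n")
    case True
    then obtain m where n: "n = 2 * m"
      by blast
    have "S (2 * m + 1) = S (2 * m) + a (2 * m)"
      using S_Suc[of "2 * m"] by simp
    then show ?thesis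
      using Leibniz(2)[of m, folded S_def] Leibniz(4)[of m, folded S_def] unfolding n by linarith
  next
    case False
    then obtain m where n: "n = 2 * m + 1"
      using oddE by blast
    have "S (2 * (m + 1)) = S (2 * m + 1) - a (2 * m + 1)"
      using S_Suc[of "2 * m + 1"] by simp
    then show ?thesis
      using Leibniz(2)[of "m + 1", folded S_def] Leibniz(4)[of m, folded S_def] unfolding n by linarith
  qed
  then show ?thesis
    by (simp only: S_def)
qed

lemma abs_exp_neg_minus_partial_sum_le:
  fixes u :: real
  assumes "0 \<le> u" and "u \<le> 1"
  shows "\<bar>exp (- u) - (\<Sum>i<n. (- u) ^ i / fact i)\<bar> \<le> u ^ n / fact n"
proof -
  define a where "a i = u ^ i / fact i" for i
  have terms: "(- u) ^ i / fact i = (-1) ^ i * a i" for i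
    unfolding a_def power_minus[of u i] by simp
  have "a \<longlonglongrightarrow> 0"
    unfolding a_def using summable_exp[of u] summable_LIMSEQ_zero by (simp add: divide_inverse mult.commute)
  moreover have a_nonneg: "0 \<le> a i" for i
    using assms by (simp add: a_def)
  moreover have "a (Suc i) \<le> a i" for i
  proof -
    have "a (Suc i) = u / Suc i * a i"
      by (simp add: a_def field_simps)
    also have "\<dots> \<le> 1 * a i"
      using assms a_nonneg by (intro mult_right_mono) auto
    finally show ?thesis
      by simp
  qed
  ultimately have "\<bar>(\<Sum>i. (-1) ^ i * a i) - (\<Sum>i<n. (-1) ^ i * a i)\<bar> \<le> a n"
    by (rule abs_suminf_alternating_minus_partial_sum_le)
  moreover have "(\<Sum>i. (-1) ^ i * a i) = exp (- u)"
  proof -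
    have "(\<lambda>i. (- u) ^ i /\<^sub>R fact i) sums exp (- u)"
      by (rule exp_converges)
    then show ?thesis
      unfolding real_scaleR_def inverse_eq_divide by (simp add: terms sums_iff)
  qed
  ultimately show ?thesis
    by (simp only: terms a_def)
qed

lemma abs_gauss_minus_taylor_gauss_le:
  assumes "x\<^sup>2 \<le> 2"
  shows "\<bar>gauss x - taylor_gauss d x\<bar> \<le> x\<^sup>2 / 2 / sqrt (2 * pi)"
proof -
  define u where "u = x\<^sup>2 / 2"
  define n where "n = Suc (d div 2)"
  have u: "0 \<le> u" "u \<le> 1"
    using assms by (auto simp: u_def)
  have "u ^ n \<le> u ^ 1"
    using u by (intro power_decreasing) (auto simp: n_def)
  then have "u ^ n / fact n \<le> u ^ 1 / 1"
    using u by (intro frac_le) (auto simp: fact_ge_1)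
  then have remainder: "\<bar>exp (- u) - (\<Sum>i<n. (- u) ^ i / fact i)\<bar> \<le> u"
    using abs_exp_neg_minus_partial_sum_le[OF u, of n] by simp
  have neg_u: "- (x\<^sup>2) / 2 = - u"
    by (simp add: u_def)
  have "gauss x - taylor_gauss d x = (exp (- u) - (\<Sum>i<n. (- u) ^ i / fact i)) / sqrt (2 * pi)"
    unfolding gauss_def taylor_gauss_eq_partial_sum n_def[symmetric] neg_u diff_divide_distrib ..
  then have "\<bar>gauss x - taylor_gauss d x\<bar> = \<bar>exp (- u) - (\<Sum>i<n. (- u) ^ i / fact i)\<bar> / sqrt (2 * pi)"
    by (simp add: abs_divide)
  also have "\<dots> \<le> u / sqrt (2 * pi)"
    using remainder by (rule divide_right_mono) simp
  finally show ?thesis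
    by (simp add: u_def)
qed

lemma gauss_eq_std_normal_density: "gauss = std_normal_density"
  by (simp add: fun_eq_iff gauss_def std_normal_density_def)

lemma borel_measurable_gauss[measurable]: "gauss \<in> borel_measurable borel"
  by (simp add: gauss_eq_std_normal_density)

lemma borel_measurable_taylor_gauss[measurable]: "taylor_gauss d \<in> borel_measurable borel"
  unfolding taylor_gauss_def by (intro borel_measurable_continuous_onI continuous_intros)

lemma borel_measurable_Ptilde[measurable]: "Ptilde K eps \<in> borel_measurable borel"
  unfolding Ptilde_def by measurable

lemma nn_integral_rescale_shift:
  fixes f :: "real \<Rightarrow> real"
  assumes [measurable]: "f \<in> borel_measurable borel" and "0 < t"
  shows "(\<integral>\<^sup>+x. ennreal (t * f (t * (x - m))) \<partial>lborel) = (\<integral>\<^sup>+x. ennreal (f x) \<partial>lborel)"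
proof -
  have "(\<integral>\<^sup>+x. ennreal (f x) \<partial>lborel) = ennreal t * (\<integral>\<^sup>+x. ennreal (f (- t * m + t * x)) \<partial>lborel)"
    using \<open>0 < t\<close> by (subst nn_integral_real_affine[where c = t and t = "- t * m"]) auto
  also have "\<dots> = (\<integral>\<^sup>+x. ennreal (t * f (t * (x - m))) \<partial>lborel)"
    using \<open>0 < t\<close> by (subst nn_integral_cmult[symmetric]) (auto simp: ennreal_mult' algebra_simps)
  finally show ?thesis ..
qed

lemma nn_integral_abs_mixture_diff_le:
  fixes f g :: "real \<Rightarrow> real"
  assumes [measurable]: "f \<in> borel_measurable borel" "g \<in> borel_measurable borel"
    and "in_Theta k w \<mu> \<tau>"
  shows "(\<integral>\<^sup>+x. ennreal \<bar>(\<Sum>i<k. w i * \<tau> i * f (\<tau> i * (x - \<mu> i)))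
                      - (\<Sum>i<k. w i * \<tau> i * g (\<tau> i * (x - \<mu> i)))\<bar> \<partial>lborel)
    \<le> (\<integral>\<^sup>+x. ennreal \<bar>f x - g x\<bar> \<partial>lborel)"
proof -
  define E where "E y = \<bar>f y - g y\<bar>" for y
  have [measurable]: "E \<in> borel_measurable borel"
    unfolding E_def[abs_def] by measurable
  have w: "\<And>i. i < k \<Longrightarrow> 0 \<le> w i" and w_sum: "(\<Sum>i<k. w i) = 1" and \<tau>: "\<And>i. i < k \<Longrightarrow> 0 < \<tau> i"
    using assms by (auto simp: in_Theta_def)
  have "ennreal \<bar>(\<Sum>i<k. w i * \<tau> i * f (\<tau> i * (x - \<mu> i))) - (\<Sum>i<k. w i * \<tau> i * g (\<tau> i * (x - \<mu> i)))\<bar>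
      \<le> (\<Sum>i<k. ennreal (w i) * ennreal (\<tau> i * E (\<tau> i * (x - \<mu> i))))" for x
  proof -
    have "\<bar>(\<Sum>i<k. w i * \<tau> i * f (\<tau> i * (x - \<mu> i))) - (\<Sum>i<k. w i * \<tau> i * g (\<tau> i * (x - \<mu> i)))\<bar>
        = \<bar>\<Sum>i<k. w i * \<tau> i * (f (\<tau> i * (x - \<mu> i)) - g (\<tau> i * (x - \<mu> i)))\<bar>"
      by (simp add: sum_subtractf right_diff_distrib)
    also have "\<dots> \<le> (\<Sum>i<k. \<bar>w i * \<tau> i * (f (\<tau> i * (x - \<mu> i)) - g (\<tau> i * (x - \<mu> i)))\<bar>)"
      by (rule sum_abs)
    also have "\<dots> = (\<Sum>i<k. w i * (\<tau> i * E (\<tau> i * (x - \<mu> i))))"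
      using w \<tau> by (intro sum.cong) (auto simp: E_def abs_mult less_imp_le)
    finally have "ennreal \<bar>(\<Sum>i<k. w i * \<tau> i * f (\<tau> i * (x - \<mu> i))) - (\<Sum>i<k. w i * \<tau> i * g (\<tau> i * (x - \<mu> i)))\<bar>
        \<le> ennreal (\<Sum>i<k. w i * (\<tau> i * E (\<tau> i * (x - \<mu> i))))"
      by (rule ennreal_leI)
    also have "\<dots> = (\<Sum>i<k. ennreal (w i * (\<tau> i * E (\<tau> i * (x - \<mu> i)))))"
      using w \<tau> by (intro sum_ennreal[symmetric]) (auto simp: E_def less_imp_le)
    also have "\<dots> = (\<Sum>i<k. ennreal (w i) * ennreal (\<tau> i * E (\<tau> i * (x - \<mu> i))))"
      using w by (intro sum.cong refl) (simp add: ennreal_mult')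
    finally show ?thesis .
  qed
  then have "(\<integral>\<^sup>+x. ennreal \<bar>(\<Sum>i<k. w i * \<tau> i * f (\<tau> i * (x - \<mu> i)))
                      - (\<Sum>i<k. w i * \<tau> i * g (\<tau> i * (x - \<mu> i)))\<bar> \<partial>lborel)
      \<le> (\<integral>\<^sup>+x. (\<Sum>i<k. ennreal (w i) * ennreal (\<tau> i * E (\<tau> i * (x - \<mu> i)))) \<partial>lborel)"
    by (rule nn_integral_mono)
  also have "\<dots> = (\<Sum>i<k. ennreal (w i) * (\<integral>\<^sup>+x. ennreal (\<tau> i * E (\<tau> i * (x - \<mu> i))) \<partial>lborel))"
    by (simp add: nn_integral_sum nn_integral_cmult)
  also have "\<dots> = (\<Sum>i<k. ennreal (w i)) * (\<integral>\<^sup>+x. ennreal (E x) \<partial>lborel)"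
    using \<tau> by (simp add: nn_integral_rescale_shift sum_distrib_right)
  also have "(\<Sum>i<k. ennreal (w i)) = 1"
    using w w_sum by (subst sum_ennreal) auto
  finally show ?thesis
    by (simp add: E_def)
qed

lemma mixture_eq: "mixture k w \<mu> \<tau> x = (\<Sum>i<k. w i * \<tau> i * gauss (\<tau> i * (x - \<mu> i)))"
  unfolding mixture_def gauss_def by (simp add: power_mult_distrib)

lemma gauss_le_exp_neg_abs:
  "gauss x \<le> exp (c\<^sup>2 / 2) / sqrt (2 * pi) * exp (- c * \<bar>x\<bar>)"
proof -
  have "- (x\<^sup>2) / 2 \<le> c\<^sup>2 / 2 + - c * \<bar>x\<bar>"
    using zero_le_power2[of "\<bar>x\<bar> - c"] by (simp add: power2_eq_square algebra_simps)
  then have "exp (- (x\<^sup>2) / 2) \<le> exp (c\<^sup>2 / 2) * exp (- c * \<bar>x\<bar>)"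
    by (simp add: exp_add[symmetric])
  then show ?thesis
    by (simp add: gauss_def divide_right_mono)
qed

lemma nn_integral_exp_neg_Ici:
  fixes a c :: real
  assumes "0 < a"
  shows "(\<integral>\<^sup>+x. ennreal (exp (- a * x)) * indicator {c..} x \<partial>lborel) = ennreal (exp (- a * c) / a)"
proof -
  let ?f = "\<lambda>x. ennreal (exp (- a * x)) * indicator {c..} x"
  have "(\<integral>\<^sup>+x. ?f x \<partial>lborel) = ennreal (1 / a) * (\<integral>\<^sup>+x. ?f (c + (1 / a) * x) \<partial>lborel)"
    using assms by (subst nn_integral_real_affine[where c = "1 / a" and t = c]) auto
  \<comment> \<open>The factor \<open>x ^ 0\<close> matches the shape of \<open>nn_intergal_power_times_exp_Ici\<close>.\<close>
  also have "(\<integral>\<^sup>+x. ?f (c + (1 / a) * x) \<partial>lborel)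
      = (\<integral>\<^sup>+x. ennreal (exp (- a * c)) * (ennreal (x ^ 0 * exp (- x)) * indicator {0..} x) \<partial>lborel)"
  proof (intro nn_integral_cong)
    fix x :: real
    have "exp (- a * (c + 1 / a * x)) = exp (- a * c) * exp (- x)"
      using assms by (simp add: exp_add[symmetric] field_simps)
    moreover have "indicator {c..} (c + 1 / a * x) = (indicator {0..} x :: ennreal)"
      using assms by (auto simp: indicator_def field_simps)
    ultimately show "?f (c + (1 / a) * x) = ennreal (exp (- a * c)) * (ennreal (x ^ 0 * exp (- x)) * indicator {0..} x)"
      by (simp add: ennreal_mult' mult.assoc)
  qed
  also have "\<dots> = ennreal (exp (- a * c))"
    by (simp add: nn_integral_cmult nn_intergal_power_times_exp_Ici del: power_0)
  finally show ?thesis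
    using assms by (simp add: ennreal_mult'[symmetric] divide_inverse mult.commute)
qed

lemma nn_integral_exp_neg_abs_outside_le:
  fixes a c :: real
  assumes "0 < a" and "0 \<le> c"
  shows "(\<integral>\<^sup>+x. ennreal (exp (- a * \<bar>x\<bar>)) * indicator (- {-c..c}) x \<partial>lborel) \<le> ennreal (2 * exp (- a * c) / a)"
proof -
  have "ennreal (exp (- a * \<bar>x\<bar>)) * indicator (- {-c..c}) x
      \<le> ennreal (exp (- a * x)) * indicator {c..} x + ennreal (exp (- a * - x)) * indicator {c..} (- x)" for x
    using \<open>0 \<le> c\<close> by (cases "x < - c"; cases "c < x") (auto simp: indicator_def)
  then have "(\<integral>\<^sup>+x. ennreal (exp (- a * \<bar>x\<bar>)) * indicator (- {-c..c}) x \<partial>lborel)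
      \<le> (\<integral>\<^sup>+x. ennreal (exp (- a * x)) * indicator {c..} x \<partial>lborel)
        + (\<integral>\<^sup>+x. ennreal (exp (- a * - x)) * indicator {c..} (- x) \<partial>lborel)"
    by (subst nn_integral_add[symmetric]) (auto intro: nn_integral_mono)
  also have "(\<integral>\<^sup>+x. ennreal (exp (- a * - x)) * indicator {c..} (- x) \<partial>lborel)
      = (\<integral>\<^sup>+x. ennreal (exp (- a * x)) * indicator {c..} x \<partial>lborel)"
    using nn_integral_real_affine[where f = "\<lambda>x. ennreal (exp (- a * x)) * indicator {c..} x" and c = "-1" and t = 0]
    by simp
  also have "(\<integral>\<^sup>+x. ennreal (exp (- a * x)) * indicator {c..} x \<partial>lborel) = ennreal (exp (- a * c) / a)"
    using \<open>0 < a\<close> by (rule nn_integral_exp_neg_Ici)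
  finally show ?thesis
    using \<open>0 < a\<close> by (simp add: ennreal_plus[symmetric] del: ennreal_plus)
qed

lemma nn_integral_abs_gauss_minus_truncation_le:
  fixes f :: "real \<Rightarrow> real" and c :: real
  assumes [measurable]: "f \<in> borel_measurable borel" and "0 < c"
  shows "(\<integral>\<^sup>+x. ennreal \<bar>gauss x - f x * indicator {-c..c} x\<bar> \<partial>lborel)
    \<le> (\<integral>\<^sup>+x\<in>{-c..c}. ennreal \<bar>gauss x - f x\<bar> \<partial>lborel)
       + ennreal (2 * exp (- (c\<^sup>2) / 2) / (c * sqrt (2 * pi)))"
proof -
  define C where "C = exp (c\<^sup>2 / 2) / sqrt (2 * pi)"
  have "C \<ge> 0"
    by (simp add: C_def)
  have "ennreal \<bar>gauss x - f x * indicator {-c..c} x\<bar>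
      \<le> ennreal \<bar>gauss x - f x\<bar> * indicator {-c..c} x
         + ennreal C * (ennreal (exp (- c * \<bar>x\<bar>)) * indicator (- {-c..c}) x)" for x
    using gauss_le_exp_neg_abs[of x c] \<open>C \<ge> 0\<close>
    by (cases "x \<in> {-c..c}") (auto simp: C_def ennreal_mult'[symmetric] gauss_def intro!: ennreal_leI)
  then have "(\<integral>\<^sup>+x. ennreal \<bar>gauss x - f x * indicator {-c..c} x\<bar> \<partial>lborel)
      \<le> (\<integral>\<^sup>+x\<in>{-c..c}. ennreal \<bar>gauss x - f x\<bar> \<partial>lborel)
         + ennreal C * (\<integral>\<^sup>+x. ennreal (exp (- c * \<bar>x\<bar>)) * indicator (- {-c..c}) x \<partial>lborel)"
    by (subst nn_integral_cmult[symmetric], simp, subst nn_integral_add[symmetric]) (auto intro: nn_integral_mono)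
  also have "\<dots> \<le> (\<integral>\<^sup>+x\<in>{-c..c}. ennreal \<bar>gauss x - f x\<bar> \<partial>lborel)
         + ennreal C * ennreal (2 * exp (- c * c) / c)"
    using \<open>0 < c\<close> by (intro add_left_mono mult_left_mono nn_integral_exp_neg_abs_outside_le) auto
  also have "ennreal C * ennreal (2 * exp (- c * c) / c) = ennreal (2 * exp (- (c\<^sup>2) / 2) / (c * sqrt (2 * pi)))"
  proof -
    have "exp (c\<^sup>2 / 2) * exp (- c * c) = exp (- (c\<^sup>2) / 2)"
      by (simp add: exp_add[symmetric] power2_eq_square)
    moreover have "C * (2 * exp (- c * c) / c) = 2 * (exp (c\<^sup>2 / 2) * exp (- c * c)) / (c * sqrt (2 * pi))"
      unfolding C_def by (simp add: field_simps)
    ultimately show ?thesis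
      using \<open>C \<ge> 0\<close> by (simp add: ennreal_mult'[symmetric])
  qed
  finally show ?thesis .
qed

lemma nn_integral_abs_gauss_minus_taylor_truncation_le:
  fixes c :: real
  assumes "0 \<le> c" and "c\<^sup>2 \<le> 2"
  shows "(\<integral>\<^sup>+x. ennreal \<bar>gauss x - taylor_gauss d x * indicator {-c..c} x\<bar> \<partial>lborel)
    \<le> ennreal (1 - c * (2 - 2 * c\<^sup>2 / 3) / sqrt (2 * pi))"
proof -
  define s where "s = sqrt (2 * pi)"
  define q where "q x = (1 - x\<^sup>2) / s" for x
  \<comment> \<open>\<open>h\<close> dominates the error since \<open>gauss x \<ge> (1 - x\<^sup>2 / 2) / s\<close>, and its integral is explicit.\<close>
  define h where "h x = gauss x - q x * indicator {-c..c} x" for x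
  have "s > 0"
    by (simp add: s_def)
  have bound: "\<bar>gauss x - taylor_gauss d x * indicator {-c..c} x\<bar> \<le> h x" for x
  proof (cases "x \<in> {-c..c}")
    case True
    then have "x\<^sup>2 \<le> c\<^sup>2"
      using abs_le_square_iff[of x c] \<open>0 \<le> c\<close> by auto
    then have "\<bar>gauss x - taylor_gauss d x\<bar> \<le> x\<^sup>2 / 2 / s"
      unfolding s_def using \<open>c\<^sup>2 \<le> 2\<close> by (intro abs_gauss_minus_taylor_gauss_le) simp
    moreover have "(1 - x\<^sup>2 / 2) / s \<le> gauss x"
      using exp_ge_add_one_self[of "- (x\<^sup>2) / 2"] \<open>s > 0\<close>
      by (simp add: gauss_def s_def divide_right_mono)
    moreover have "(1 - x\<^sup>2 / 2) / s - q x = x\<^sup>2 / 2 / s"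
      using \<open>s > 0\<close> by (simp add: q_def field_simps)
    ultimately show ?thesis
      using True by (simp add: h_def)
  next
    case False
    then show ?thesis
      by (simp add: h_def gauss_def)
  qed
  have q_cont: "continuous_on UNIV q"
    unfolding q_def using \<open>s > 0\<close> by (intro continuous_intros) auto
  have q_integrable: "integrable lborel (\<lambda>x. q x * indicator {-c..c} x)"
    using q_cont by (intro borel_integrable_atLeastAtMost) (simp add: continuous_on_eq_continuous_at)
  have "(\<integral>x. indicator {-c..c} x *\<^sub>R q x \<partial>lborel) = (c - c ^ 3 / 3) / s - (- c - (- c) ^ 3 / 3) / s"
  proof (rule integral_FTC_atLeastAtMost)
    fix x
    show "((\<lambda>x. (x - x ^ 3 / 3) / s) has_vector_derivative q x) (at x within {-c..c})"
      unfolding q_def has_real_derivative_iff_has_vector_derivative[symmetric] using \<open>s > 0\<close>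
      by (auto intro!: derivative_eq_intros simp: field_simps power2_eq_square)
  qed (use \<open>0 \<le> c\<close> q_cont continuous_on_subset in auto)
  also have "\<dots> = c * (2 - 2 * c\<^sup>2 / 3) / s"
    by (simp only: diff_divide_distrib[symmetric]) (simp add: power2_eq_square power3_eq_cube algebra_simps)
  finally have q_integral: "(\<integral>x. q x * indicator {-c..c} x \<partial>lborel) = c * (2 - 2 * c\<^sup>2 / 3) / s"
    by (simp add: mult.commute)
  have "(\<integral>\<^sup>+x. ennreal \<bar>gauss x - taylor_gauss d x * indicator {-c..c} x\<bar> \<partial>lborel)
      \<le> (\<integral>\<^sup>+x. ennreal (h x) \<partial>lborel)"
    by (intro nn_integral_mono ennreal_leI bound)
  also have "\<dots> = ennreal (\<integral>x. h x \<partial>lborel)"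
    using bound[THEN order_trans[OF abs_ge_zero]] q_integrable
    by (intro nn_integral_eq_integral) (auto simp: h_def gauss_eq_std_normal_density)
  also have "(\<integral>x. h x \<partial>lborel) = 1 - c * (2 - 2 * c\<^sup>2 / 3) / s"
    unfolding h_def using q_integrable
    by (subst Bochner_Integration.integral_diff) (auto simp: q_integral gauss_eq_std_normal_density)
  finally show ?thesis
    by (simp add: s_def)
qed

lemma sqrt_two_pi_bounds: "2.44 < sqrt (2 * pi)" "sqrt (2 * pi) < 2.85"
proof -
  show "2.44 < sqrt (2 * pi)"
    using pi_gt3 by (intro real_less_rsqrt) (simp add: power2_eq_square)
  show "sqrt (2 * pi) < 2.85"
    using pi_less_4 by (intro real_less_lsqrt) (auto simp: power2_eq_square)
qed

lemma gauss_tail_bound_le: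
  fixes c :: real
  assumes "11/10 \<le> c"
  shows "2 * exp (- (c\<^sup>2) / 2) / (c * sqrt (2 * pi)) \<le> 3 / 4 * exp (- (c\<^sup>2) / 4)"
proof -
  define e where "e = exp (- (c\<^sup>2) / 4)"
  have "0 < e" "e \<le> 1"
    by (auto simp: e_def)
  have square: "exp (- (c\<^sup>2) / 2) = e * e"
    by (simp add: e_def exp_add[symmetric])
  have "8 / 3 \<le> c * sqrt (2 * pi)"
    using mult_mono[of "11/10" c "2.44" "sqrt (2 * pi)"] assms sqrt_two_pi_bounds by simp
  moreover have "2 * (e * e) \<le> 2 * e"
    using \<open>0 < e\<close> \<open>e \<le> 1\<close> by (simp add: mult_left_le)
  ultimately have "2 * (e * e) / (c * sqrt (2 * pi)) \<le> 2 * e / (8 / 3)"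
    using \<open>0 < e\<close> by (intro frac_le) auto
  then show ?thesis
    unfolding square e_def[symmetric] by simp
qed

lemma one_minus_truncated_mass_le:
  fixes c :: real
  assumes "0 \<le> c" and "c \<le> 11/10"
  shows "1 - c * (2 - 2 * c\<^sup>2 / 3) / sqrt (2 * pi) \<le> exp (- (c\<^sup>2) / 4)"
proof -
  have "c * c \<le> 11/10 * (11/10)"
    using assms by (intro mult_mono) auto
  then have "1.19 \<le> 2 - 2 * c\<^sup>2 / 3"
    by (simp add: power2_eq_square)
  then have "c * 1.19 \<le> c * (2 - 2 * c\<^sup>2 / 3)"
    using assms(1) by (rule mult_left_mono)
  moreover have "c * 1.19 / 2.85 \<le> c * 1.19 / sqrt (2 * pi)"
    using assms sqrt_two_pi_bounds by (intro divide_left_mono) auto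
  moreover have "c\<^sup>2 / 4 \<le> c * 1.19 / 2.85"
    using assms mult_left_mono[of c "11/10" c] by (simp add: power2_eq_square)
  moreover have "1 - c\<^sup>2 / 4 \<le> exp (- (c\<^sup>2) / 4)"
    using exp_ge_add_one_self[of "- (c\<^sup>2) / 4"] by simp
  ultimately show ?thesis
    using divide_right_mono[of "c * 1.19" "c * (2 - 2 * c\<^sup>2 / 3)" "sqrt (2 * pi)"] by simp
qed

lemma nn_integral_abs_gauss_minus_taylor_truncation_nonpos_le:
  fixes c :: real
  assumes "c \<le> 0"
  shows "(\<integral>\<^sup>+x. ennreal \<bar>gauss x - taylor_gauss d x * indicator {-c..c} x\<bar> \<partial>lborel) \<le> 1"
proof -
  have "\<bar>gauss x - taylor_gauss d x * indicator {-c..c} x\<bar> \<le> gauss x" for x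
  proof (cases "x \<in> {-c..c}")
    case True
    with \<open>c \<le> 0\<close> have "x = 0"
      by simp
    then have "taylor_gauss d x = gauss x"
      using abs_gauss_minus_taylor_gauss_le[of 0 d] by simp
    then show ?thesis
      using True by (simp add: gauss_def)
  qed (simp add: gauss_def)
  then have "(\<integral>\<^sup>+x. ennreal \<bar>gauss x - taylor_gauss d x * indicator {-c..c} x\<bar> \<partial>lborel)
      \<le> (\<integral>\<^sup>+x. ennreal (gauss x) \<partial>lborel)"
    by (intro nn_integral_mono ennreal_leI)
  also have "\<dots> = 1"
    by (simp add: gauss_eq_std_normal_density nn_integral_eq_integral)
  finally show ?thesis .
qed

lemma nn_integral_abs_gauss_minus_truncation_large_le:
  fixes f :: "real \<Rightarrow> real" and c :: real
  assumes [measurable]: "f \<in> borel_measurable borel" and "11/10 \<le> c"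
    and "(\<integral>\<^sup>+x\<in>{-c..c}. ennreal \<bar>gauss x - f x\<bar> \<partial>lborel) \<le> ennreal (exp (- (c\<^sup>2) / 4) / 4)"
  shows "(\<integral>\<^sup>+x. ennreal \<bar>gauss x - f x * indicator {-c..c} x\<bar> \<partial>lborel) \<le> ennreal (exp (- (c\<^sup>2) / 4))"
proof -
  have "(\<integral>\<^sup>+x. ennreal \<bar>gauss x - f x * indicator {-c..c} x\<bar> \<partial>lborel)
      \<le> (\<integral>\<^sup>+x\<in>{-c..c}. ennreal \<bar>gauss x - f x\<bar> \<partial>lborel)
         + ennreal (2 * exp (- (c\<^sup>2) / 2) / (c * sqrt (2 * pi)))"
    using assms(2) by (intro nn_integral_abs_gauss_minus_truncation_le) auto
  also have "\<dots> \<le> ennreal (exp (- (c\<^sup>2) / 4) / 4) + ennreal (3 / 4 * exp (- (c\<^sup>2) / 4))"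
    using assms(3) gauss_tail_bound_le[OF assms(2)] by (intro add_mono ennreal_leI)
  also have "\<dots> = ennreal (exp (- (c\<^sup>2) / 4))"
    by (simp add: ennreal_plus[symmetric] del: ennreal_plus)
  finally show ?thesis .
qed

lemma nn_integral_abs_gauss_minus_taylor_truncation_small_le:
  fixes c :: real
  assumes "0 \<le> c" and "c \<le> 11/10"
  shows "(\<integral>\<^sup>+x. ennreal \<bar>gauss x - taylor_gauss d x * indicator {-c..c} x\<bar> \<partial>lborel)
    \<le> ennreal (exp (- (c\<^sup>2) / 4))"
proof -
  have "c\<^sup>2 \<le> 2"
    using assms mult_mono[of c "11/10" c "11/10"] by (simp add: power2_eq_square)
  with \<open>0 \<le> c\<close> have "(\<integral>\<^sup>+x. ennreal \<bar>gauss x - taylor_gauss d x * indicator {-c..c} x\<bar> \<partial>lborel)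
      \<le> ennreal (1 - c * (2 - 2 * c\<^sup>2 / 3) / sqrt (2 * pi))"
    by (rule nn_integral_abs_gauss_minus_taylor_truncation_le)
  also have "\<dots> \<le> ennreal (exp (- (c\<^sup>2) / 4))"
    using assms by (intro ennreal_leI one_minus_truncated_mass_le)
  finally show ?thesis .
qed

lemma nn_integral_abs_gauss_minus_Ptilde_le:
  fixes eps K :: real
  assumes "eps > 0"
    and taylor_close: "(\<integral>\<^sup>+ x \<in> {- 2 * sqrt (ln (1 / eps)) .. 2 * sqrt (ln (1 / eps))}.
            ennreal \<bar>gauss x - taylor_gauss (taylor_deg K eps) x\<bar> \<partial>lborel) < ennreal (eps / 4)"
  shows "(\<integral>\<^sup>+ x. ennreal \<bar>gauss x - Ptilde K eps x\<bar> \<partial>lborel) \<le> ennreal eps"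
proof -
  define c where "c = 2 * sqrt (ln (1 / eps))"
  define d where "d = taylor_deg K eps"
  have Ptilde_eq: "Ptilde K eps = (\<lambda>x. taylor_gauss d x * indicator {-c..c} x)"
    by (simp add: fun_eq_iff Ptilde_def d_def c_def indicator_def)
  show ?thesis
  proof (cases "eps < 1")
    case False
    \<comment> \<open>\<open>sqrt\<close> is odd, so a nonpositive \<open>ln (1 / eps)\<close> gives \<open>c \<le> 0\<close>.\<close>
    then have "c \<le> 0"
      using \<open>eps > 0\<close> by (simp add: c_def)
    then have "(\<integral>\<^sup>+ x. ennreal \<bar>gauss x - Ptilde K eps x\<bar> \<partial>lborel) \<le> 1"
      unfolding Ptilde_eq by (rule nn_integral_abs_gauss_minus_taylor_truncation_nonpos_le)
    also have "\<dots> \<le> ennreal eps"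
      using False by simp
    finally show ?thesis .
  next
    case True
    then have "c > 0"
      using \<open>eps > 0\<close> by (simp add: c_def)
    have eps_eq: "eps = exp (- (c\<^sup>2) / 4)"
      using \<open>eps > 0\<close> True by (simp add: c_def power_mult_distrib ln_div)
    show ?thesis
    proof (cases "11/10 \<le> c")
      case True
      moreover have "(\<integral>\<^sup>+x\<in>{-c..c}. ennreal \<bar>gauss x - taylor_gauss d x\<bar> \<partial>lborel) \<le> ennreal (eps / 4)"
        using less_imp_le[OF taylor_close] by (simp add: c_def d_def)
      ultimately show ?thesis
        unfolding Ptilde_eq unfolding eps_eq by (intro nn_integral_abs_gauss_minus_truncation_large_le) auto
    next
      case False
      then show ?thesis
        unfolding Ptilde_eq unfolding eps_eq using \<open>c > 0\<close> by (intro nn_integral_abs_gauss_minus_taylor_truncation_small_le) auto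
    qed
  qed
qed

theorem lemma6:
  fixes eps K :: real and k :: nat and w \<mu> \<tau> :: "nat \<Rightarrow> real"
  assumes "eps > 0"
    and "(\<integral>\<^sup>+ x \<in> {- 2 * sqrt (ln (1 / eps)) .. 2 * sqrt (ln (1 / eps))}.
            ennreal \<bar>gauss x - taylor_gauss (taylor_deg K eps) x\<bar> \<partial>lborel) < ennreal (eps / 4)"
    and "in_Theta k w \<mu> \<tau>"
  shows "(\<integral>\<^sup>+ x. ennreal \<bar>mixture k w \<mu> \<tau> x - P_mix K eps k w \<mu> \<tau> x\<bar> \<partial>lborel) \<le> ennreal eps"
proof -
  have "(\<integral>\<^sup>+ x. ennreal \<bar>mixture k w \<mu> \<tau> x - P_mix K eps k w \<mu> \<tau> x\<bar> \<partial>lborel)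
      \<le> (\<integral>\<^sup>+ x. ennreal \<bar>gauss x - Ptilde K eps x\<bar> \<partial>lborel)"
    unfolding mixture_eq P_mix_def by (rule nn_integral_abs_mixture_diff_le[of gauss "Ptilde K eps", OF _ _ assms(3)]) measurable
  also have "\<dots> \<le> ennreal eps"
    using assms(1,2) by (rule nn_integral_abs_gauss_minus_Ptilde_le)
  finally show ?thesis .
qed

end
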